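(* Let $\mathbb{S}$ be the Sorgenfrey line and let $\Delta_2=\{(x,y)\in\mathbb{S}^2: x\leq y\}$ with the subspace topology from $\mathbb{S}^2$. Then $\Delta_2$ and $\mathbb{S}^2$ are homeomorphic.
   Context: The Sorgenfrey line $\mathbb{S}$ is the real line with the topology generated by half-open intervals $[a,b[$; $\mathbb{S}^2$ carries the product topology. *)

theory Defs
  imports "HOL-Analysis.Analysis"
begin

definition sorgenfrey :: "real topology" where
  "sorgenfrey = topology_generated_by {{a..<b} | a b. a < b}"

end

(*
  For x < y let k be the first level at which x and y lie in different dyadic intervals
  [n/2^k, (n+1)/2^k[.  Stretch the half of y's level-k interval that contains y affinely onto
  the whole interval, obtaining w, and send (x, y) to (x, w) if y lies in the right half and
  to (w, x) otherwise; the diagonal stays fixed.  As w stays in y's level-k interval, x and w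
  still separate at level k, so the half is recovered from the side of the diagonal the image
  lies on, and the map is a bijection onto the plane.

  Dyadic intervals are open in the Sorgenfrey line.  Hence near a point off the diagonal the
  level and the half are locally constant and the map is affine there, while near a point of
  the diagonal the level is large, which confines w to a small right neighbourhood.
*)

theory Submission
  imports Defs
begin

section \<open>The Sorgenfrey plane\<close>

abbreviation sorgenfrey_plane :: "(real \<times> real) topology" where
  "sorgenfrey_plane \<equiv> prod_topology sorgenfrey sorgenfrey"

lemma openin_sorgenfrey:
  "openin sorgenfrey U \<longleftrightarrow> (\<forall>x\<in>U. \<exists>e>0. {x..<x+e} \<subseteq> U)"
proof
  assume "openin sorgenfrey U"
  then have "generate_topology_on {{a..<b} | a b. a < b} U"
    by (simp add: sorgenfrey_def openin_topology_generated_by_iff)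
  then show "\<forall>x\<in>U. \<exists>e>0. {x..<x+e} \<subseteq> U"
  proof induct
    case Empty
    show ?case by simp
  next
    case (Int a b)
    show ?case
    proof
      fix x assume "x \<in> a \<inter> b"
      then obtain e1 e2 where "e1 > 0" "{x..<x+e1} \<subseteq> a" "e2 > 0" "{x..<x+e2} \<subseteq> b"
        using Int by blast
      then show "\<exists>e>0. {x..<x+e} \<subseteq> a \<inter> b"
        by (intro exI[of _ "min e1 e2"]) (auto simp: subset_iff)
    qed
  next
    case (UN K)
    then show ?case by (meson UnionE UnionI subsetI subset_eq)
  next
    case (Basis s)
    then obtain a b where "s = {a..<b}" by blast
    then show ?case by (auto intro!: exI[of _ "b - _"])
  qed
next
  assume H: "\<forall>x\<in>U. \<exists>e>0. {x..<x+e} \<subseteq> U"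
  let ?B = "{{a..<b} | a b. a < b}"
  have "U = \<Union>{S \<in> ?B. S \<subseteq> U}"
  proof (intro equalityI subsetI)
    fix x assume "x \<in> U"
    then obtain e where "e > 0" "{x..<x+e} \<subseteq> U" using H by blast
    moreover have "{x..<x+e} \<in> ?B"
      using \<open>e > 0\<close> by (intro CollectI exI[of _ x] exI[of _ "x+e"]) simp
    ultimately show "x \<in> \<Union>{S \<in> ?B. S \<subseteq> U}"
      using \<open>e > 0\<close> by (intro UnionI[of "{x..<x+e}"]) auto
  qed auto
  moreover have "generate_topology_on ?B (\<Union>{S \<in> ?B. S \<subseteq> U})"
    by (rule generate_topology_on.UN) (auto intro: generate_topology_on.Basis)
  ultimately show "openin sorgenfrey U"
    by (simp add: sorgenfrey_def openin_topology_generated_by_iff)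
qed

lemma topspace_sorgenfrey [simp]: "topspace sorgenfrey = UNIV"
proof -
  have "openin sorgenfrey UNIV"
    unfolding openin_sorgenfrey using zero_less_one by blast
  then show ?thesis
    using openin_subset by blast
qed

lemma openin_sorgenfrey_atLeastLessThan: "openin sorgenfrey {a..<b}"
  by (auto simp: openin_sorgenfrey intro!: exI[of _ "b - _"])

definition half_open_square :: "real \<times> real \<Rightarrow> real \<Rightarrow> (real \<times> real) set" where
  "half_open_square p d = {fst p..<fst p + d} \<times> {snd p..<snd p + d}"

lemma mem_half_open_square [simp]:
  "(a, b) \<in> half_open_square (x, y) d \<longleftrightarrow> x \<le> a \<and> a < x + d \<and> y \<le> b \<and> b < y + d"
  by (simp add: half_open_square_def)

lemma openin_sorgenfrey_plane:
  "openin sorgenfrey_plane W \<longleftrightarrow> (\<forall>p\<in>W. \<exists>d>0. half_open_square p d \<subseteq> W)"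
  unfolding openin_prod_topology_alt
proof (intro iffI ballI allI impI)
  fix p assume "\<forall>x y. (x, y) \<in> W \<longrightarrow> (\<exists>U V. openin sorgenfrey U \<and> openin sorgenfrey V \<and>
    x \<in> U \<and> y \<in> V \<and> U \<times> V \<subseteq> W)" and "p \<in> W"
  then obtain x y U V where p: "p = (x, y)" and UV: "openin sorgenfrey U" "openin sorgenfrey V"
    "x \<in> U" "y \<in> V" "U \<times> V \<subseteq> W"
    by (metis surj_pair)
  obtain e1 e2 where "e1 > 0" "{x..<x+e1} \<subseteq> U" "e2 > 0" "{y..<y+e2} \<subseteq> V"
    using UV by (meson openin_sorgenfrey)
  then have "half_open_square p (min e1 e2) \<subseteq> W"
    using UV(5) by (fastforce simp: p half_open_square_def)
  then show "\<exists>d>0. half_open_square p d \<subseteq> W"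
    using \<open>e1 > 0\<close> \<open>e2 > 0\<close> by (intro exI[of _ "min e1 e2"]) auto
next
  fix x y assume "\<forall>p\<in>W. \<exists>d>0. half_open_square p d \<subseteq> W" "(x, y) \<in> W"
  then obtain d where "d > 0" "half_open_square (x, y) d \<subseteq> W" by blast
  then show "\<exists>U V. openin sorgenfrey U \<and> openin sorgenfrey V \<and> x \<in> U \<and> y \<in> V \<and> U \<times> V \<subseteq> W"
    by (intro exI[of _ "{x..<x+d}"] exI[of _ "{y..<y+d}"])
      (auto simp: half_open_square_def openin_sorgenfrey_atLeastLessThan)
qed

lemma openin_half_open_square: "openin sorgenfrey_plane (half_open_square p d)"
  unfolding openin_sorgenfrey_plane
proof
  fix r assume "r \<in> half_open_square p d"
  then show "\<exists>d'>0. half_open_square r d' \<subseteq> half_open_square p d"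
    by (intro exI[of _ "min (fst p + d - fst r) (snd p + d - snd r)"])
      (auto simp: half_open_square_def)
qed

definition sorgenfrey_continuous_at ::
    "(real \<times> real) set \<Rightarrow> (real \<times> real \<Rightarrow> real \<times> real) \<Rightarrow> real \<times> real \<Rightarrow> bool" where
  "sorgenfrey_continuous_at A f p \<longleftrightarrow>
     (\<forall>e>0. \<exists>d>0. \<forall>q\<in>A \<inter> half_open_square p d. f q \<in> half_open_square (f p) e)"

lemma continuous_map_sorgenfrey_planeI:
  assumes "f ` A \<subseteq> B" and "\<And>p. p \<in> A \<Longrightarrow> sorgenfrey_continuous_at A f p"
  shows "continuous_map (subtopology sorgenfrey_plane A) (subtopology sorgenfrey_plane B) f"
  unfolding continuous_map_def
proof (intro conjI allI impI)
  show "f \<in> topspace (subtopology sorgenfrey_plane A) \<rightarrow> topspace (subtopology sorgenfrey_plane B)"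
    using assms(1) by auto
  fix U assume "openin (subtopology sorgenfrey_plane B) U"
  then obtain W where W: "openin sorgenfrey_plane W" "U = W \<inter> B"
    by (auto simp: openin_subtopology)
  define T where "T = \<Union>{half_open_square p d | p d. p \<in> A \<and> d > 0 \<and>
    (\<forall>q\<in>A \<inter> half_open_square p d. f q \<in> W)}"
  have "openin sorgenfrey_plane T"
    unfolding T_def by (rule openin_Union) (auto intro: openin_half_open_square)
  moreover have "{p \<in> topspace (subtopology sorgenfrey_plane A). f p \<in> U} = T \<inter> A"
  proof (intro equalityI subsetI)
    fix p assume "p \<in> {p \<in> topspace (subtopology sorgenfrey_plane A). f p \<in> U}"
    then have p: "p \<in> A" "f p \<in> W" using W by auto
    then obtain e where "e > 0" "half_open_square (f p) e \<subseteq> W"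
      using W(1) openin_sorgenfrey_plane by meson
    moreover obtain d where "d > 0" "\<forall>q\<in>A \<inter> half_open_square p d. f q \<in> half_open_square (f p) e"
      using assms(2)[OF p(1)] \<open>e > 0\<close> unfolding sorgenfrey_continuous_at_def by meson
    moreover have "p \<in> half_open_square p d"
      using \<open>d > 0\<close> by (cases p) simp
    ultimately show "p \<in> T \<inter> A"
      unfolding T_def using p(1) by blast
  qed (use W assms(1) T_def in auto)
  ultimately show "openin (subtopology sorgenfrey_plane A)
      {p \<in> topspace (subtopology sorgenfrey_plane A). f p \<in> U}"
    by (auto simp: openin_subtopology)
qed

section \<open>Dyadic cells\<close>

definition dyadic_cell :: "nat \<Rightarrow> real \<Rightarrow> int" where
  "dyadic_cell k z = \<lfloor>2^k * z\<rfloor>"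

lemma dyadic_cell_mono: "x \<le> y \<Longrightarrow> dyadic_cell k x \<le> dyadic_cell k y"
  unfolding dyadic_cell_def by (simp add: floor_mono)

lemma less_if_dyadic_cell_less: "dyadic_cell k x < dyadic_cell k y \<Longrightarrow> x < y"
  using dyadic_cell_mono by (meson not_le)

lemma less_if_same_dyadic_cell: "dyadic_cell k w = dyadic_cell k z \<Longrightarrow> w < z + 1 / 2^k"
proof -
  assume "dyadic_cell k w = dyadic_cell k z"
  then have "2^k * w < 2^k * z + 1"
    unfolding dyadic_cell_def by linarith
  then show ?thesis
    by (simp add: field_simps)
qed

lemma dyadic_cell_eqI:
  assumes "2^k * z = of_int n + t" "0 \<le> t" "t < 1"
  shows "dyadic_cell k z = n" "frac (2^k * z) = t"
  using assms by (simp_all add: dyadic_cell_def floor_unique frac_eq)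

lemma dyadic_cell_coarsen:
  assumes "dyadic_cell k x = dyadic_cell k y" "j \<le> k"
  shows "dyadic_cell j x = dyadic_cell j y"
proof -
  have "(2::real)^k = 2^j * 2^(k-j)"
    using assms(2) by (simp flip: power_add)
  then have rescale: "(2::real)^j * z = (2^k * z) / of_int (2^(k-j))" for z
    by simp
  show ?thesis
    using assms(1) unfolding dyadic_cell_def rescale
    by (subst (1 2) floor_divide_real_eq_div) auto
qed

lemma dyadic_cell_locally_constant:
  obtains d where "d > 0" "\<And>z'. z \<le> z' \<Longrightarrow> z' < z + d \<Longrightarrow> dyadic_cell k z' = dyadic_cell k z"
proof
  let ?p = "(2::real)^k"
  define d where "d = (of_int (dyadic_cell k z) + 1 - ?p * z) / ?p"
  show "d > 0"
    unfolding d_def dyadic_cell_def by (simp add: divide_pos_pos)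
  fix z' assume "z \<le> z'" "z' < z + d"
  then have "?p * z \<le> ?p * z'" "?p * z' < of_int (dyadic_cell k z) + 1"
    by (auto simp: d_def field_simps)
  then show "dyadic_cell k z' = dyadic_cell k z"
    unfolding dyadic_cell_def by (intro floor_unique) linarith+
qed

lemma dyadic_cells_separate:
  assumes "x < y"
  shows "\<exists>k. dyadic_cell k x \<noteq> dyadic_cell k y"
proof -
  obtain k where "1 / (y - x) < (2::real)^k"
    using real_arch_pow[of 2 "1 / (y - x)"] by auto
  then have "2^k * x + 1 < 2^k * y"
    using assms by (simp add: field_simps)
  then have "dyadic_cell k x \<noteq> dyadic_cell k y"
    unfolding dyadic_cell_def by linarith
  then show ?thesis ..
qed

definition split_level :: "real \<Rightarrow> real \<Rightarrow> nat" where
  "split_level x y = (LEAST k. dyadic_cell k x \<noteq> dyadic_cell k y)"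

lemma dyadic_cell_split_level_less:
  assumes "x < y"
  shows "dyadic_cell (split_level x y) x < dyadic_cell (split_level x y) y"
proof -
  have "dyadic_cell (split_level x y) x \<noteq> dyadic_cell (split_level x y) y"
    unfolding split_level_def by (rule LeastI_ex) (rule dyadic_cells_separate[OF assms])
  moreover have "dyadic_cell (split_level x y) x \<le> dyadic_cell (split_level x y) y"
    using assms by (simp add: dyadic_cell_mono)
  ultimately show ?thesis by simp
qed

lemma dyadic_cell_eq_below_split_level:
  "j < split_level x y \<Longrightarrow> dyadic_cell j x = dyadic_cell j y"
  unfolding split_level_def using not_less_Least by blast

lemma less_split_level:
  assumes "x < y" "dyadic_cell j x = dyadic_cell j y"
  shows "j < split_level x y"
proof (rule ccontr)
  assume "\<not> j < split_level x y"
  then have "dyadic_cell (split_level x y) x = dyadic_cell (split_level x y) y"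
    using dyadic_cell_coarsen[OF assms(2)] by simp
  then show False
    using dyadic_cell_split_level_less[OF assms(1)] by simp
qed

lemma split_level_eqI:
  assumes "x < y" "k = split_level x y"
    and "dyadic_cell k x' = dyadic_cell k x" "dyadic_cell k y' = dyadic_cell k y"
  shows "x' < y'" "split_level x' y' = k"
proof -
  have separated: "dyadic_cell k x' < dyadic_cell k y'"
    using assms dyadic_cell_split_level_less by simp
  then show "x' < y'"
    by (rule less_if_dyadic_cell_less)
  show "split_level x' y' = k"
    unfolding split_level_def
  proof (rule Least_equality)
    show "dyadic_cell k x' \<noteq> dyadic_cell k y'"
      using separated by simp
    fix j assume neq: "dyadic_cell j x' \<noteq> dyadic_cell j y'"
    show "k \<le> j"
    proof (rule ccontr)
      assume "\<not> k \<le> j"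
      then have "dyadic_cell j x = dyadic_cell j y"
        using assms(2) dyadic_cell_eq_below_split_level by simp
      moreover have "dyadic_cell j x' = dyadic_cell j x" "dyadic_cell j y' = dyadic_cell j y"
        using dyadic_cell_coarsen[OF assms(3)] dyadic_cell_coarsen[OF assms(4)] \<open>\<not> k \<le> j\<close>
        by simp_all
      ultimately show False
        using neq by simp
    qed
  qed
qed

lemma split_level_same_cell:
  assumes "x < y" "k = split_level x y" "dyadic_cell k w = dyadic_cell k y"
  shows "x < w" "w < y + 1 / 2^k" "split_level x w = k"
  using split_level_eqI[OF assms(1,2) refl assms(3)] less_if_same_dyadic_cell[OF assms(3)]
  by simp_all

lemma split_level_locally_constant:
  assumes "x < y"
  obtains d where "d > 0"
    "\<And>x' y'. x \<le> x' \<Longrightarrow> x' < x + d \<Longrightarrow> y \<le> y' \<Longrightarrow> y' < y + d \<Longrightarrow>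
       x' < y' \<and> split_level x' y' = split_level x y \<and>
       dyadic_cell (Suc (split_level x y)) y' = dyadic_cell (Suc (split_level x y)) y"
proof -
  define k where "k = split_level x y"
  obtain d1 where d1: "d1 > 0" "\<And>x'. x \<le> x' \<Longrightarrow> x' < x + d1 \<Longrightarrow> dyadic_cell k x' = dyadic_cell k x"
    using dyadic_cell_locally_constant by blast
  obtain d2 where d2: "d2 > 0"
    "\<And>y'. y \<le> y' \<Longrightarrow> y' < y + d2 \<Longrightarrow> dyadic_cell (Suc k) y' = dyadic_cell (Suc k) y"
    using dyadic_cell_locally_constant by blast
  show ?thesis
  proof (rule that[of "min d1 d2"])
    fix x' y' assume "x \<le> x'" "x' < x + min d1 d2" "y \<le> y'" "y' < y + min d1 d2"
    then have "dyadic_cell k x' = dyadic_cell k x"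
      and y': "dyadic_cell (Suc k) y' = dyadic_cell (Suc k) y"
      using d1(2)[of x'] d2(2)[of y'] by simp_all
    moreover have "dyadic_cell k y' = dyadic_cell k y"
      using dyadic_cell_coarsen[OF y'] by simp
    ultimately show "x' < y' \<and> split_level x' y' = split_level x y \<and>
       dyadic_cell (Suc (split_level x y)) y' = dyadic_cell (Suc (split_level x y)) y"
      using split_level_eqI[OF assms k_def] unfolding k_def by blast
  qed (use d1 d2 in simp)
qed

text \<open>Points near the diagonal split only at a high level, whose cells are short.\<close>
lemma split_level_near_diagonal:
  assumes "e > 0"
  obtains d where "d > 0"
    "\<And>x' y' w. x \<le> x' \<Longrightarrow> x' < y' \<Longrightarrow> y' < x + d \<Longrightarrow>
       dyadic_cell (split_level x' y') w = dyadic_cell (split_level x' y') y' \<Longrightarrow> x' < w \<and> w < x + e"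
proof -
  obtain j where j: "(1/2)^j < e / 2"
    using real_arch_pow_inv[of "e / 2" "1/2"] assms by auto
  obtain d0 where d0: "d0 > 0" "\<And>z. x \<le> z \<Longrightarrow> z < x + d0 \<Longrightarrow> dyadic_cell j z = dyadic_cell j x"
    using dyadic_cell_locally_constant by blast
  show ?thesis
  proof (rule that[of "min d0 (e / 2)"])
    fix x' y' w
    assume xy: "x \<le> x'" "x' < y'" "y' < x + min d0 (e / 2)"
      and w: "dyadic_cell (split_level x' y') w = dyadic_cell (split_level x' y') y'"
    have "dyadic_cell j x' = dyadic_cell j y'"
      using xy d0(2)[of x'] d0(2)[of y'] by simp
    then have "j < split_level x' y'"
      by (rule less_split_level[OF xy(2)])
    then have "1 / 2^split_level x' y' \<le> (1/2::real)^j"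
      by (simp add: power_one_over frac_le power_increasing)
    moreover have "x' < w" "w < y' + 1 / 2^split_level x' y'"
      using split_level_same_cell[OF xy(2) refl w] by simp_all
    ultimately show "x' < w \<and> w < x + e"
      using xy j by linarith
  qed (use assms d0 in simp)
qed

definition right_half :: "nat \<Rightarrow> real \<Rightarrow> bool" where
  "right_half k z \<longleftrightarrow> odd (dyadic_cell (Suc k) z)"

text \<open>\<open>stretch k\<close> doubles each half of a level-\<open>k\<close> dyadic cell affinely onto the whole
  cell; \<open>squeeze k b\<close> maps the cell affinely onto its right (\<open>b\<close>) or left (\<open>\<not> b\<close>) half.\<close>
definition stretch :: "nat \<Rightarrow> real \<Rightarrow> real" where
  "stretch k z = (dyadic_cell k z + frac (2^Suc k * z)) / 2^k"

definition squeeze :: "nat \<Rightarrow> bool \<Rightarrow> real \<Rightarrow> real" where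
  "squeeze k b z = (dyadic_cell k z + (of_bool b + frac (2^k * z)) / 2) / 2^k"

lemma dyadic_cell_Suc:
  "dyadic_cell (Suc k) z = 2 * dyadic_cell k z + of_bool (right_half k z)"
proof -
  have "2 * dyadic_cell k z \<le> dyadic_cell (Suc k) z"
    and "dyadic_cell (Suc k) z < 2 * dyadic_cell k z + 2"
    unfolding dyadic_cell_def by (simp_all add: le_floor_iff floor_less_iff) linarith+
  then consider "dyadic_cell (Suc k) z = 2 * dyadic_cell k z"
    | "dyadic_cell (Suc k) z = 2 * dyadic_cell k z + 1"
    by linarith
  then show ?thesis
    unfolding right_half_def by cases auto
qed

lemma frac_dyadic_Suc:
  "frac (2^Suc k * z) = 2 * frac (2^k * z) - of_bool (right_half k z)"
proof -
  have "2^Suc k * z = 2 * (dyadic_cell k z + frac (2^k * z))"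
    unfolding dyadic_cell_def frac_def by simp
  then show ?thesis
    using dyadic_cell_Suc[of k z] unfolding frac_def dyadic_cell_def by simp
qed

lemma dyadic_cell_stretch:
  "dyadic_cell k (stretch k z) = dyadic_cell k z"
  "frac (2^k * stretch k z) = frac (2^Suc k * z)"
proof -
  have "2^k * stretch k z = of_int (dyadic_cell k z) + frac (2^Suc k * z)"
    by (simp add: stretch_def)
  from dyadic_cell_eqI[OF this frac_ge_0 frac_lt_1] show
    "dyadic_cell k (stretch k z) = dyadic_cell k z" "frac (2^k * stretch k z) = frac (2^Suc k * z)"
    by simp_all
qed

lemma dyadic_cell_squeeze:
  "dyadic_cell k (squeeze k b z) = dyadic_cell k z"
  "frac (2^k * squeeze k b z) = (of_bool b + frac (2^k * z)) / 2"
proof -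
  have "2^k * squeeze k b z = of_int (dyadic_cell k z) + (of_bool b + frac (2^k * z)) / 2"
    by (simp add: squeeze_def)
  moreover have "0 \<le> (of_bool b + frac (2^k * z)) / 2" "(of_bool b + frac (2^k * z)) / 2 < 1"
    using frac_ge_0[of "2^k * z"] frac_lt_1[of "2^k * z"] by auto
  ultimately show
    "dyadic_cell k (squeeze k b z) = dyadic_cell k z"
    "frac (2^k * squeeze k b z) = (of_bool b + frac (2^k * z)) / 2"
    using dyadic_cell_eqI by blast+
qed

lemma right_half_squeeze: "right_half k (squeeze k b z) = b"
proof -
  have "2^Suc k * squeeze k b z = of_int (2 * dyadic_cell k z + of_bool b) + frac (2^k * z)"
    by (simp add: squeeze_def field_simps)
  then have "dyadic_cell (Suc k) (squeeze k b z) = 2 * dyadic_cell k z + of_bool b"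
    by (rule dyadic_cell_eqI) (simp_all add: frac_ge_0 frac_lt_1)
  then show ?thesis
    unfolding right_half_def by simp
qed

lemma stretch_squeeze: "stretch k (squeeze k b z) = z"
  using dyadic_cell_squeeze[of k b z] right_half_squeeze[of k b z]
    frac_dyadic_Suc[of k "squeeze k b z"]
  by (simp add: stretch_def dyadic_cell_def frac_def field_simps)

lemma squeeze_stretch: "squeeze k (right_half k z) (stretch k z) = z"
  using dyadic_cell_stretch[of k z] frac_dyadic_Suc[of k z]
  by (simp add: squeeze_def dyadic_cell_def frac_def field_simps)

lemma stretch_affine:
  assumes "dyadic_cell (Suc k) z' = dyadic_cell (Suc k) z"
  shows "stretch k z' = stretch k z + 2 * (z' - z)"
  using assms dyadic_cell_coarsen[OF assms, of k]
  by (simp add: stretch_def dyadic_cell_def frac_def field_simps)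

lemma squeeze_affine:
  assumes "dyadic_cell k z' = dyadic_cell k z"
  shows "squeeze k b z' = squeeze k b z + (z' - z) / 2"
  using assms by (simp add: squeeze_def dyadic_cell_def frac_def field_simps)

section \<open>The homeomorphism\<close>

definition delta_to_plane :: "real \<times> real \<Rightarrow> real \<times> real" where
  "delta_to_plane = (\<lambda>(x, y). if x = y then (x, y) else
     let k = split_level x y; w = stretch k y in if right_half k y then (x, w) else (w, x))"

definition plane_to_delta :: "real \<times> real \<Rightarrow> real \<times> real" where
  "plane_to_delta = (\<lambda>(u, v). if u = v then (u, v)
     else if u < v then (u, squeeze (split_level u v) True v)
     else (v, squeeze (split_level v u) False u))"

lemma split_level_squeeze:
  assumes "x < y"
  shows "x < squeeze (split_level x y) b y"
    and "split_level x (squeeze (split_level x y) b y) = split_level x y"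
  using split_level_same_cell[OF assms refl dyadic_cell_squeeze(1)] by simp_all

lemma split_level_stretch:
  assumes "x < y"
  shows "x < stretch (split_level x y) y"
    and "split_level x (stretch (split_level x y) y) = split_level x y"
  using split_level_same_cell[OF assms refl dyadic_cell_stretch(1)] by simp_all

lemma plane_to_delta_le: "plane_to_delta q \<in> {(x, y). x \<le> y}"
proof (cases q)
  case (Pair u v)
  consider "u = v" | "u < v" | "v < u" by linarith
  then show ?thesis
    by cases (use split_level_squeeze in \<open>auto simp: Pair plane_to_delta_def less_imp_le\<close>)
qed

lemma plane_to_delta_delta_to_plane:
  assumes "x \<le> y"
  shows "plane_to_delta (delta_to_plane (x, y)) = (x, y)"
proof (cases "x = y")
  case False
  with assms have "x < y" by simp
  define k where "k = split_level x y"
  define w where "w = stretch k y"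
  have "x < w" "split_level x w = k"
    using split_level_stretch[OF \<open>x < y\<close>] by (simp_all add: k_def w_def)
  moreover have "squeeze k (right_half k y) w = y"
    unfolding w_def by (rule squeeze_stretch)
  ultimately show ?thesis
    using False by (cases "right_half k y") (simp_all add: delta_to_plane_def plane_to_delta_def
        Let_def flip: k_def w_def)
qed (simp add: delta_to_plane_def plane_to_delta_def)

lemma delta_to_plane_plane_to_delta: "delta_to_plane (plane_to_delta q) = q"
proof (cases q)
  case (Pair u v)
  consider "u = v" | "u < v" | "v < u" by linarith
  then show ?thesis
  proof cases
    case 2
    define s where "s = squeeze (split_level u v) True v"
    have "u < s" "split_level u s = split_level u v"
      using split_level_squeeze[OF 2] by (simp_all add: s_def)
    moreover have "right_half (split_level u v) s = True" "stretch (split_level u v) s = v"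
      unfolding s_def by (rule right_half_squeeze, rule stretch_squeeze)
    ultimately show ?thesis
      using 2 by (simp add: Pair delta_to_plane_def plane_to_delta_def Let_def flip: s_def)
  next
    case 3
    define s where "s = squeeze (split_level v u) False u"
    have "v < s" "split_level v s = split_level v u"
      using split_level_squeeze[OF 3] by (simp_all add: s_def)
    moreover have "right_half (split_level v u) s = False" "stretch (split_level v u) s = u"
      unfolding s_def by (rule right_half_squeeze, rule stretch_squeeze)
    ultimately show ?thesis
      using 3 by (simp add: Pair delta_to_plane_def plane_to_delta_def Let_def flip: s_def)
  qed (simp add: Pair delta_to_plane_def plane_to_delta_def)
qed

lemma delta_to_plane_continuous_at_diagonal:
  "sorgenfrey_continuous_at {(x, y). x \<le> y} delta_to_plane (x, x)"
  unfolding sorgenfrey_continuous_at_def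
proof (intro allI impI)
  fix e :: real assume "e > 0"
  then obtain d where "d > 0" and near: "\<And>x' y' w. x \<le> x' \<Longrightarrow> x' < y' \<Longrightarrow> y' < x + d \<Longrightarrow>
      dyadic_cell (split_level x' y') w = dyadic_cell (split_level x' y') y' \<Longrightarrow> x' < w \<and> w < x + e"
    using split_level_near_diagonal by blast
  have "delta_to_plane (x', y') \<in> half_open_square (x, x) e"
    if "x' \<le> y'" "(x', y') \<in> half_open_square (x, x) (min d e)" for x' y'
  proof (cases "x' = y'")
    case False
    have "x \<le> x'" "x' < y'" "y' < x + d"
      using that False by auto
    from near[OF this dyadic_cell_stretch(1)]
    have "x' < stretch (split_level x' y') y' \<and> stretch (split_level x' y') y' < x + e" .
    then show ?thesis
      using that False by (auto simp: delta_to_plane_def Let_def)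
  qed (use that in \<open>auto simp: delta_to_plane_def\<close>)
  then show "\<exists>d>0. \<forall>q\<in>{(x, y). x \<le> y} \<inter> half_open_square (x, x) d.
      delta_to_plane q \<in> half_open_square (delta_to_plane (x, x)) e"
    using \<open>d > 0\<close> \<open>e > 0\<close> by (intro exI[of _ "min d e"]) (auto simp: delta_to_plane_def)
qed

lemma delta_to_plane_continuous_at_off_diagonal:
  assumes "x < y"
  shows "sorgenfrey_continuous_at {(x, y). x \<le> y} delta_to_plane (x, y)"
  unfolding sorgenfrey_continuous_at_def
proof (intro allI impI)
  fix e :: real assume "e > 0"
  define k where "k = split_level x y"
  obtain d where "d > 0" and near: "\<And>x' y'. x \<le> x' \<Longrightarrow> x' < x + d \<Longrightarrow> y \<le> y' \<Longrightarrow> y' < y + d \<Longrightarrow>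
      x' < y' \<and> split_level x' y' = k \<and> dyadic_cell (Suc k) y' = dyadic_cell (Suc k) y"
    unfolding k_def using split_level_locally_constant[OF assms] by blast
  have "delta_to_plane (x', y') \<in> half_open_square (delta_to_plane (x, y)) e"
    if "(x', y') \<in> half_open_square (x, y) (min d (e / 2))" for x' y'
  proof -
    have "x \<le> x'" "x' < x + d" "y \<le> y'" "y' < y + d"
      using that by auto
    then have "x' < y'" "split_level x' y' = k"
      and cell: "dyadic_cell (Suc k) y' = dyadic_cell (Suc k) y"
      using near by blast+
    moreover have "right_half k y' = right_half k y"
      using cell by (simp add: right_half_def)
    moreover have "stretch k y' = stretch k y + 2 * (y' - y)"
      using cell by (rule stretch_affine)
    ultimately show ?thesis
      using that assms by (auto simp: delta_to_plane_def Let_def simp flip: k_def)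
  qed
  then show "\<exists>d>0. \<forall>q\<in>{(x, y). x \<le> y} \<inter> half_open_square (x, y) d.
      delta_to_plane q \<in> half_open_square (delta_to_plane (x, y)) e"
    using \<open>d > 0\<close> \<open>e > 0\<close> by (intro exI[of _ "min d (e / 2)"]) auto
qed

lemma plane_to_delta_continuous_at_diagonal:
  "sorgenfrey_continuous_at UNIV plane_to_delta (x, x)"
  unfolding sorgenfrey_continuous_at_def
proof (intro allI impI)
  fix e :: real assume "e > 0"
  then obtain d where "d > 0" and near: "\<And>x' y' w. x \<le> x' \<Longrightarrow> x' < y' \<Longrightarrow> y' < x + d \<Longrightarrow>
      dyadic_cell (split_level x' y') w = dyadic_cell (split_level x' y') y' \<Longrightarrow> x' < w \<and> w < x + e"
    using split_level_near_diagonal by blast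
  have "plane_to_delta (u, v) \<in> half_open_square (x, x) e"
    if "(u, v) \<in> half_open_square (x, x) (min d e)" for u v
  proof -
    consider "u = v" | "u < v" | "v < u" by linarith
    then show ?thesis
    proof cases
      case 2
      have "x \<le> u" "u < v" "v < x + d"
        using that 2 by auto
      from near[OF this dyadic_cell_squeeze(1)[where b = True]] show ?thesis
        using that 2 by (auto simp: plane_to_delta_def)
    next
      case 3
      have "x \<le> v" "v < u" "u < x + d"
        using that 3 by auto
      from near[OF this dyadic_cell_squeeze(1)[where b = False]] show ?thesis
        using that 3 by (auto simp: plane_to_delta_def)
    qed (use that in \<open>auto simp: plane_to_delta_def\<close>)
  qed
  then show "\<exists>d>0. \<forall>q\<in>UNIV \<inter> half_open_square (x, x) d.
      plane_to_delta q \<in> half_open_square (plane_to_delta (x, x)) e"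
    using \<open>d > 0\<close> \<open>e > 0\<close> by (intro exI[of _ "min d e"]) (auto simp: plane_to_delta_def)
qed

lemma plane_to_delta_continuous_at_above_diagonal:
  assumes "u < v"
  shows "sorgenfrey_continuous_at UNIV plane_to_delta (u, v)"
  unfolding sorgenfrey_continuous_at_def
proof (intro allI impI)
  fix e :: real assume "e > 0"
  define k where "k = split_level u v"
  obtain d where "d > 0" and near: "\<And>u' v'. u \<le> u' \<Longrightarrow> u' < u + d \<Longrightarrow> v \<le> v' \<Longrightarrow> v' < v + d \<Longrightarrow>
      u' < v' \<and> split_level u' v' = k \<and> dyadic_cell (Suc k) v' = dyadic_cell (Suc k) v"
    unfolding k_def using split_level_locally_constant[OF assms] by blast
  have "plane_to_delta (u', v') \<in> half_open_square (plane_to_delta (u, v)) e"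
    if "(u', v') \<in> half_open_square (u, v) (min d e)" for u' v'
  proof -
    have "u \<le> u'" "u' < u + d" "v \<le> v'" "v' < v + d"
      using that by auto
    then have "u' < v'" "split_level u' v' = k" and "dyadic_cell (Suc k) v' = dyadic_cell (Suc k) v"
      using near by blast+
    moreover have "squeeze k True v' = squeeze k True v + (v' - v) / 2"
      using dyadic_cell_coarsen[OF \<open>dyadic_cell (Suc k) v' = _\<close>] by (intro squeeze_affine) simp
    ultimately show ?thesis
      using that assms by (auto simp: plane_to_delta_def simp flip: k_def)
  qed
  then show "\<exists>d>0. \<forall>q\<in>UNIV \<inter> half_open_square (u, v) d.
      plane_to_delta q \<in> half_open_square (plane_to_delta (u, v)) e"
    using \<open>d > 0\<close> \<open>e > 0\<close> by (intro exI[of _ "min d e"]) auto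
qed

lemma plane_to_delta_continuous_at_below_diagonal:
  assumes "v < u"
  shows "sorgenfrey_continuous_at UNIV plane_to_delta (u, v)"
  unfolding sorgenfrey_continuous_at_def
proof (intro allI impI)
  fix e :: real assume "e > 0"
  define k where "k = split_level v u"
  obtain d where "d > 0" and near: "\<And>v' u'. v \<le> v' \<Longrightarrow> v' < v + d \<Longrightarrow> u \<le> u' \<Longrightarrow> u' < u + d \<Longrightarrow>
      v' < u' \<and> split_level v' u' = k \<and> dyadic_cell (Suc k) u' = dyadic_cell (Suc k) u"
    unfolding k_def using split_level_locally_constant[OF assms] by blast
  have "plane_to_delta (u', v') \<in> half_open_square (plane_to_delta (u, v)) e"
    if "(u', v') \<in> half_open_square (u, v) (min d e)" for u' v'
  proof -
    have "v \<le> v'" "v' < v + d" "u \<le> u'" "u' < u + d"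
      using that by auto
    then have "v' < u'" "split_level v' u' = k" and "dyadic_cell (Suc k) u' = dyadic_cell (Suc k) u"
      using near by blast+
    moreover have "squeeze k False u' = squeeze k False u + (u' - u) / 2"
      using dyadic_cell_coarsen[OF \<open>dyadic_cell (Suc k) u' = _\<close>] by (intro squeeze_affine) simp
    ultimately show ?thesis
      using that assms by (auto simp: plane_to_delta_def simp flip: k_def)
  qed
  then show "\<exists>d>0. \<forall>q\<in>UNIV \<inter> half_open_square (u, v) d.
      plane_to_delta q \<in> half_open_square (plane_to_delta (u, v)) e"
    using \<open>d > 0\<close> \<open>e > 0\<close> by (intro exI[of _ "min d e"]) auto
qed

lemma continuous_map_delta_to_plane:
  "continuous_map (subtopology sorgenfrey_plane {(x, y). x \<le> y}) sorgenfrey_plane delta_to_plane"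
proof -
  have "continuous_map (subtopology sorgenfrey_plane {(x, y). x \<le> y})
      (subtopology sorgenfrey_plane UNIV) delta_to_plane"
  proof (rule continuous_map_sorgenfrey_planeI)
    fix p :: "real \<times> real" assume "p \<in> {(x, y). x \<le> y}"
    then obtain x y where p: "p = (x, y)" and "x \<le> y"
      by auto
    then show "sorgenfrey_continuous_at {(x, y). x \<le> y} delta_to_plane p"
      using delta_to_plane_continuous_at_diagonal delta_to_plane_continuous_at_off_diagonal
      by (cases "x = y") simp_all
  qed simp
  then show ?thesis
    by simp
qed

lemma continuous_map_plane_to_delta:
  "continuous_map sorgenfrey_plane (subtopology sorgenfrey_plane {(x, y). x \<le> y}) plane_to_delta"
proof -
  have "continuous_map (subtopology sorgenfrey_plane UNIV)
      (subtopology sorgenfrey_plane {(x, y). x \<le> y}) plane_to_delta"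
  proof (rule continuous_map_sorgenfrey_planeI)
    fix p :: "real \<times> real"
    obtain u v where p: "p = (u, v)"
      by (cases p)
    consider "u = v" | "u < v" | "v < u"
      by linarith
    then show "sorgenfrey_continuous_at UNIV plane_to_delta p"
      unfolding p using plane_to_delta_continuous_at_diagonal
        plane_to_delta_continuous_at_above_diagonal plane_to_delta_continuous_at_below_diagonal
      by cases simp_all
  qed (intro image_subsetI plane_to_delta_le)
  then show ?thesis
    by simp
qed

theorem theorem4p3:
  shows "subtopology (prod_topology sorgenfrey sorgenfrey) {(x, y). x \<le> y}
           homeomorphic_space prod_topology sorgenfrey sorgenfrey"
proof -
  have "homeomorphic_maps (subtopology sorgenfrey_plane {(x, y). x \<le> y}) sorgenfrey_plane
      delta_to_plane plane_to_delta"
    unfolding homeomorphic_maps_def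
  proof (intro conjI ballI continuous_map_delta_to_plane continuous_map_plane_to_delta)
    fix p assume "p \<in> topspace (subtopology sorgenfrey_plane {(x, y). x \<le> y})"
    then show "plane_to_delta (delta_to_plane p) = p"
      using plane_to_delta_delta_to_plane by auto
  qed (rule delta_to_plane_plane_to_delta)
  then show ?thesis
    unfolding homeomorphic_space_def by blast
qed

end
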